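(* Let $\alpha<\beta$ be the smallest and the largest real root of $q$. Let $G$ be the subgroup of $\mathbb{R}(C)^*/\mathbb{R}(C)^{*2}$ generated by the square classes $f\,\mathbb{R}(C)^{*2}$ of all psd elements $0\ne f\in\mathbb{R}[C]$ all of whose zeros in $C(\mathbb{C})$ are real. Then $G$ has order four and is generated by the square classes of $x-\alpha$ and $\beta-x$.
   Context: Let $q\in\mathbb{R}[x]$ be a monic polynomial of degree four without multiple roots which is indefinite (takes both positive and negative values on $\mathbb{R}$). Let $C$ be the affine plane curve over $\mathbb{R}$ with equation $y^2+q(x)=0$, with coordinate ring $\mathbb{R}[C]=\mathbb{R}[x,y]/(y^2+q(x))$ and function field $\mathbb{R}(C)$. An element $f\in\mathbb{R}[C]$ is psd if $f(p)\ge0$ for all $p\in C(\mathbb{R})$. *)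

theory Defs
  imports Complex_Main "HOL-Computational_Algebra.Polynomial" "HOL-Computational_Algebra.Fraction_Field"
begin

text \<open>Elements of the coordinate ring R[C] = R[x,y]/(y^2+q) are represented by their
  unique normal form a(x) + b(x) y, i.e. pairs (a,b) of real polynomials.
  Elements of the function field R(C) = R(x)(y) are represented as pairs (a,b) of
  rational functions, standing for a + b y, with y^2 = -q.\<close>

definition to_fract :: "'a::idom \<Rightarrow> 'a fract" where
  "to_fract a = Fract a 1"

type_synonym crel = "real poly \<times> real poly"
type_synonym ffel = "real poly fract \<times> real poly fract"

definition ff_mult :: "real poly \<Rightarrow> ffel \<Rightarrow> ffel \<Rightarrow> ffel" where
  "ff_mult q f g = (case f of (a, b) \<Rightarrow> case g of (c, d) \<Rightarrow>
      (a * c - b * d * to_fract q, a * d + b * c))"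

definition ff_of :: "crel \<Rightarrow> ffel" where
  "ff_of f = (to_fract (fst f), to_fract (snd f))"

definition real_points :: "real poly \<Rightarrow> (real \<times> real) set" where
  "real_points q = {(x, y). y\<^sup>2 + poly q x = 0}"

definition complex_points :: "real poly \<Rightarrow> (complex \<times> complex) set" where
  "complex_points q = {(z, w). w\<^sup>2 + poly (map_poly complex_of_real q) z = 0}"

definition cr_eval :: "crel \<Rightarrow> real \<Rightarrow> real \<Rightarrow> real" where
  "cr_eval f x y = poly (fst f) x + poly (snd f) x * y"

definition cr_ceval :: "crel \<Rightarrow> complex \<Rightarrow> complex \<Rightarrow> complex" where
  "cr_ceval f z w = poly (map_poly complex_of_real (fst f)) z
                    + poly (map_poly complex_of_real (snd f)) z * w"

definition cr_psd :: "real poly \<Rightarrow> crel \<Rightarrow> bool" where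
  "cr_psd q f \<longleftrightarrow> (\<forall>(x, y) \<in> real_points q. cr_eval f x y \<ge> 0)"

definition cr_zeros_real :: "real poly \<Rightarrow> crel \<Rightarrow> bool" where
  "cr_zeros_real q f \<longleftrightarrow>
     (\<forall>(z, w) \<in> complex_points q. cr_ceval f z w = 0 \<longrightarrow> Im z = 0 \<and> Im w = 0)"

inductive_set ff_gen :: "real poly \<Rightarrow> ffel set \<Rightarrow> ffel set" for q S where
  one: "(1, 0) \<in> ff_gen q S"
| base: "f \<in> S \<Longrightarrow> f \<in> ff_gen q S"
| mult: "f \<in> ff_gen q S \<Longrightarrow> g \<in> ff_gen q S \<Longrightarrow> ff_mult q f g \<in> ff_gen q S"
| inv: "f \<in> ff_gen q S \<Longrightarrow> ff_mult q f g = (1, 0) \<Longrightarrow> g \<in> ff_gen q S"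

definition sq_class :: "real poly \<Rightarrow> ffel \<Rightarrow> ffel set" where
  "sq_class q f = {g. \<exists>h. h \<noteq> (0, 0) \<and> g = ff_mult q f (ff_mult q h h)}"

definition psd_realzero_elems :: "real poly \<Rightarrow> ffel set" where
  "psd_realzero_elems q = {ff_of f | f. f \<noteq> (0, 0) \<and> cr_psd q f \<and> cr_zeros_real q f}"

end

theory Submission
  imports Defs "HOL-Computational_Algebra.Fundamental_Theorem_Algebra"
begin

(*
  Write q = (x - \<alpha>)(x - \<beta>) m with m monic quadratic; the two roots of m are either a
  non-real conjugate pair or two reals strictly between \<alpha> and \<beta>.  Put u = x - \<alpha>,
  v = \<beta> - x.

  (1) Upper bound.  Let f = a + b y be psd with only real zeros.  Its norm N = a^2 + q b^2
      is nonnegative on \<real> and has only real zeros, hence is a square s^2.  Then p = a + s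
      satisfies 2 p f = (p + b y)^2, so f lies in the square class of the polynomial p; and
      p is "admissible": p \<ge> 0 where q \<le> 0 and its zeros of odd order lie where q \<le> 0 or at
      roots of q.  A sign analysis then shows p u^i v^j m^k is a square in \<real>[x], and since
      u v m = -q = y^2, every such p lies in the class of one of 1, u, v, u v.
      These four classes are closed under products and inverses, so they contain the
      group G generated by all such f.
  (2) Lower bound.  u and v are themselves psd with real zeros, so all four classes lie
      in G; they are pairwise distinct because u, v and u v are not squares in \<real>(C), which
      follows from a parity count of root multiplicities.
  (3) Counting gives |G| = 4 and G = <u, v>.
*)

section \<open>Complexification of real polynomials\<close>

abbreviation cpoly :: "real poly \<Rightarrow> complex poly" where
  "cpoly p \<equiv> map_poly complex_of_real p"

lemma cpoly_mult: "cpoly (p * q) = cpoly p * cpoly q"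
  by (rule poly_eqI) (simp add: coeff_map_poly coeff_mult)

lemma cpoly_add: "cpoly (p + q) = cpoly p + cpoly q"
  by (rule poly_eqI) (simp add: coeff_map_poly)

lemma cpoly_diff: "cpoly (p - q) = cpoly p - cpoly q"
  by (rule poly_eqI) (simp add: coeff_map_poly)

lemma cpoly_uminus: "cpoly (- p) = - cpoly p"
  by (rule poly_eqI) (simp add: coeff_map_poly)

lemma cpoly_pCons: "cpoly (pCons a p) = pCons (of_real a) (cpoly p)"
  by (simp add: map_poly_pCons)

lemma cpoly_power: "cpoly (p ^ n) = cpoly p ^ n"
  by (induct n) (simp_all add: cpoly_mult)

lemma cpoly_eq_0: "cpoly p = 0 \<longleftrightarrow> p = 0"
  by (simp add: map_poly_eq_0_iff)

lemma cpoly_inj: "cpoly p = cpoly q \<Longrightarrow> p = q"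
  by (metis cpoly_diff cpoly_eq_0 eq_iff_diff_eq_0)

lemma degree_cpoly: "degree (cpoly p) = degree p"
  by (simp add: degree_map_poly)

lemma poly_cpoly: "poly (cpoly p) (of_real x) = of_real (poly p x)"
  by (induct p) (simp_all add: cpoly_pCons)

lemma poly_cpoly_cnj: "poly (cpoly p) (cnj z) = cnj (poly (cpoly p) z)"
  by (induct p) (simp_all add: cpoly_pCons)

lemma cpoly_linear: "cpoly [:-r, 1:] = [:- of_real r, 1:]"
  by (simp add: cpoly_pCons)

text \<open>Divisibility of real polynomials can be tested after complexification
  (the remainder of a real division is real).\<close>
lemma cpoly_dvd: assumes "cpoly p dvd cpoly q" shows "p dvd q"
proof (cases "p = 0")
  case True then show ?thesis using assms by (simp add: cpoly_eq_0)
next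
  case False
  have "cpoly q = cpoly p * cpoly (q div p) + cpoly (q mod p)"
    by (metis cpoly_add cpoly_mult div_mult_mod_eq mult.commute)
  then have "cpoly p dvd cpoly (q mod p)" using assms
    by (metis dvd_add_right_iff dvd_triv_left)
  moreover have "q mod p = 0 \<or> degree (q mod p) < degree p"
    using degree_mod_less[OF False] by blast
  ultimately have "q mod p = 0"
    by (metis cpoly_eq_0 degree_cpoly dvd_imp_degree_le leD)
  then show ?thesis by (simp add: mod_eq_0_iff_dvd)
qed

lemma order_cpoly: assumes "p \<noteq> 0" shows "order (of_real r) (cpoly p) = order r p"
proof -
  have "[:-r, 1:] ^ n dvd p \<longleftrightarrow> [:- of_real r, 1:] ^ n dvd cpoly p" for n
    by (metis cpoly_dvd cpoly_linear cpoly_mult cpoly_power dvd_def)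
  then show ?thesis using assms
    by (metis cpoly_eq_0 order_divides le_antisym order_1)
qed

lemma order_cpoly_mult:
  "p \<noteq> 0 \<Longrightarrow> q \<noteq> 0 \<Longrightarrow> order z (cpoly (p * q)) = order z (cpoly p) + order z (cpoly q)"
  by (simp add: cpoly_mult order_mult cpoly_eq_0)

lemma order_cnj_le: assumes "p \<noteq> 0" shows "order z (cpoly p) \<le> order (cnj z) (cpoly p)"
proof -
  define n where "n = order z (cpoly p)"
  obtain r where r: "cpoly p = [:-z, 1:] ^ n * r"
    using order_1[of z "cpoly p"] by (auto simp: n_def dvd_def)
  have cnj_hom: "map_poly cnj (s * t) = map_poly cnj s * map_poly cnj t" for s t :: "complex poly"
    by (rule poly_eqI) (simp add: coeff_map_poly coeff_mult)
  have cnj_pow: "map_poly cnj (s ^ k) = map_poly cnj s ^ k" for s :: "complex poly" and k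
    by (induct k) (simp_all add: cnj_hom)
  have "map_poly cnj ([:-z, 1:] ^ k) = [:-cnj z, 1:] ^ k" for k
    by (simp add: cnj_pow map_poly_pCons)
  moreover have "map_poly cnj (cpoly p) = cpoly p"
    by (rule poly_eqI) (simp add: coeff_map_poly)
  ultimately have "cpoly p = [:-cnj z, 1:] ^ n * map_poly cnj r"
    using r by (metis cnj_hom)
  then have "[:-cnj z, 1:] ^ n dvd cpoly p" by (metis dvd_triv_left)
  then show ?thesis using assms by (simp add: order_divides cpoly_eq_0 n_def)
qed

lemma order_cnj: "p \<noteq> 0 \<Longrightarrow> order (cnj z) (cpoly p) = order z (cpoly p)"
  using order_cnj_le[of p z] order_cnj_le[of p "cnj z"] by simp

lemma order_lin: "order z [:-a, 1:] = (if z = a then 1 else (0::nat))"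
  using order_power_n_n[of a 1] by (auto intro!: order_0I)

lemma order_cpoly_opt_lin:
  "order z (cpoly (if k then [:-a, 1:] else 1)) = (if k \<and> z = of_real a then 1 else 0)"
  by (cases k) (auto simp: cpoly_linear order_lin intro: order_0I)

lemma order_cpoly_opt_lin':
  "order z (cpoly (if k then [:a, -1:] else 1)) = (if k \<and> z = of_real a then 1 else 0)"
proof (cases k)
  case True
  have "cpoly [:a, -1:] = - [:- of_real a, 1:]" by (simp add: cpoly_pCons)
  then have "order z (cpoly [:a, -1:]) = order z [:- of_real a, 1:]" by (metis order_uminus)
  then show ?thesis using True by (simp add: order_lin)
qed (auto intro: order_0I)

section \<open>Signs of real polynomials\<close>

lemma nonroot_in:
  fixes p :: "real poly"
  assumes "p \<noteq> 0" "a < b" shows "\<exists>x. a < x \<and> x < b \<and> poly p x \<noteq> 0"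
proof -
  have "infinite {a<..<b}" using assms(2) by simp
  then have "\<not> {a<..<b} \<subseteq> {x. poly p x = 0}"
    using poly_roots_finite[OF assms(1)] finite_subset by blast
  then show ?thesis by auto
qed

lemma poly_pos_near:
  fixes p :: "real poly"
  assumes "poly p r > 0" shows "\<exists>d>0. \<forall>x. \<bar>x - r\<bar> < d \<longrightarrow> poly p x > 0"
proof -
  have "(\<lambda>x. poly p x) \<midarrow>r\<rightarrow> poly p r" using poly_isCont[where p=p and x=r] by (simp add: isCont_def)
  from LIM_D[OF this assms] obtain d where d: "d > 0"
    "\<forall>x. x \<noteq> r \<and> norm (x - r) < d \<longrightarrow> norm (poly p x - poly p r) < poly p r" by blast
  have "poly p x > 0" if "\<bar>x - r\<bar> < d" for x
    using d that assms by (cases "x = r") auto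
  then show ?thesis using d(1) by blast
qed

lemma poly_neg_near:
  fixes p :: "real poly"
  assumes "poly p r < 0" shows "\<exists>d>0. \<forall>x. \<bar>x - r\<bar> < d \<longrightarrow> poly p x < 0"
  using poly_pos_near[of "-p" r] assms by auto

lemma even_order_if_nonneg_near:
  fixes p :: "real poly"
  assumes p: "p \<noteq> 0" and d: "d > 0" and nonneg: "\<forall>x. \<bar>x - r\<bar> < d \<longrightarrow> poly p x \<ge> 0"
  shows "even (order r p)"
proof (rule ccontr)
  assume odd: "odd (order r p)"
  obtain s where s: "p = [:-r, 1:] ^ order r p * s" "\<not> [:-r, 1:] dvd s"
    using order_decomp[OF p] by blast
  have sign: "poly p x = (x - r) ^ order r p * poly s x" for x
    by (subst s(1)) simp
  have "poly s r \<noteq> 0" using s(2) by (simp add: poly_eq_0_iff_dvd)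
  then consider "poly s r > 0" | "poly s r < 0" by linarith
  then show False
  proof cases
    case 1
    then obtain e where e: "e > 0" "\<forall>x. \<bar>x - r\<bar> < e \<longrightarrow> poly s x > 0"
      using poly_pos_near by blast
    define x where "x = r - min d e / 2"
    have "\<bar>x - r\<bar> < e" "\<bar>x - r\<bar> < d" "x - r < 0" using d e by (auto simp: x_def)
    then have "poly p x < 0" using e odd by (simp add: sign mult_neg_pos)
    then show False using nonneg \<open>\<bar>x - r\<bar> < d\<close> by force
  next
    case 2
    then obtain e where e: "e > 0" "\<forall>x. \<bar>x - r\<bar> < e \<longrightarrow> poly s x < 0"
      using poly_neg_near by blast
    define x where "x = r + min d e / 2"
    have "\<bar>x - r\<bar> < e" "\<bar>x - r\<bar> < d" "x - r > 0" using d e by (auto simp: x_def)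
    then have "poly p x < 0" using e by (simp add: sign mult_pos_neg)
    then show False using nonneg \<open>\<bar>x - r\<bar> < d\<close> by force
  qed
qed

lemma poly_pos_right_of_roots:
  fixes p :: "real poly"
  assumes lc: "lead_coeff p > 0" and nr: "\<forall>y>x. poly p y \<noteq> 0" and y: "y > x"
  shows "poly p y > 0"
proof (rule ccontr)
  assume "\<not> poly p y > 0"
  then have py: "poly p y < 0" using nr y by force
  obtain n where n: "\<forall>t\<ge>n. poly p t \<ge> lead_coeff p" using poly_pinfty_gt_lc[OF lc] by blast
  define t where "t = max n (y + 1)"
  have "poly p t > 0" "y < t" using n lc by (auto simp: t_def intro: less_le_trans)
  then obtain r where "y < r" "poly p r = 0" using poly_IVT_pos[of y t p] py by blast
  then show False using nr y by auto
qed

section \<open>Real polynomials all of whose complex root multiplicities are even\<close>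

text \<open>Such a polynomial of positive degree has a real square factor D^2, deg D > 0:
  either (x - r)^2 for a real root r or the square of the real quadratic of a
  conjugate pair of roots.\<close>
lemma square_factor:
  fixes T :: "real poly"
  assumes T: "T \<noteq> 0" and ev: "\<forall>z. even (order z (cpoly T))" and deg: "degree T > 0"
  shows "\<exists>D. degree D > 0 \<and> D * D dvd T"
proof -
  have "degree (cpoly T) > 0" using deg by (simp add: degree_cpoly)
  then obtain z where z: "poly (cpoly T) z = 0"
    by (metis fundamental_theorem_of_algebra_alt degree_pCons_0 less_irrefl)
  have cT: "cpoly T \<noteq> 0" using T by (simp add: cpoly_eq_0)
  have "order z (cpoly T) \<noteq> 0" using z cT order_root by blast
  moreover have "\<And>n::nat. even n \<Longrightarrow> n \<noteq> 0 \<Longrightarrow> 2 \<le> n" by presburger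
  ultimately have oz: "order z (cpoly T) \<ge> 2" using ev by blast
  then have z2: "[:-z, 1:] ^ 2 dvd cpoly T" by (simp add: order_divides)
  show ?thesis
  proof (cases "Im z = 0")
    case True
    then have "z = of_real (Re z)" by (simp add: complex_eq_iff)
    then have "cpoly ([:-Re z, 1:] * [:-Re z, 1:]) dvd cpoly T"
      using z2 by (metis cpoly_linear cpoly_mult power2_eq_square)
    then show ?thesis by (intro exI[of _ "[:-Re z, 1:]"]) (simp add: cpoly_dvd)
  next
    case False
    define Q :: "real poly" where "Q = [:(Re z)\<^sup>2 + (Im z)\<^sup>2, -2 * Re z, 1:]"
    have cQ: "cpoly Q = [:-z, 1:] * [:-cnj z, 1:]"
      by (simp add: Q_def cpoly_pCons complex_eq_iff power2_eq_square algebra_simps)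
    obtain U where U: "cpoly T = [:-z, 1:] ^ 2 * U" using z2 by (auto simp: dvd_def)
    have "U \<noteq> 0" using U cT by auto
    moreover have "cnj z \<noteq> z" using False by (simp add: complex_eq_iff)
    then have "order (cnj z) ([:-z, 1:] ^ 2) = 0" by (intro order_0I) simp
    moreover have "order (cnj z) (cpoly T) \<ge> 2" using oz order_cnj[OF T, of z] by simp
    ultimately have "order (cnj z) U \<ge> 2" using U by (simp add: order_mult)
    then have "[:-cnj z, 1:] ^ 2 dvd U" by (simp add: order_divides)
    then have "[:-z, 1:] ^ 2 * [:-cnj z, 1:] ^ 2 dvd cpoly T" using U by simp
    then have "cpoly (Q * Q) dvd cpoly T" by (simp add: cpoly_mult cQ power2_eq_square algebra_simps)
    then show ?thesis by (intro exI[of _ Q]) (simp add: cpoly_dvd Q_def)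
  qed
qed

lemma even_order_square:
  fixes T :: "real poly"
  assumes "T \<noteq> 0" "\<forall>z. even (order z (cpoly T))" "poly T x0 > 0"
  shows "\<exists>g. T = g * g"
  using assms
proof (induct "degree T" arbitrary: T rule: less_induct)
  case less
  show ?case
  proof (cases "degree T = 0")
    case True
    then obtain c where c: "T = [:c:]" by (metis degree_eq_zeroE)
    then have "c > 0" using less.prems by simp
    then show ?thesis using c by (intro exI[of _ "[:sqrt c:]"]) simp
  next
    case False
    then obtain D T1 where D: "degree D > 0" and T1: "T = D * D * T1"
      using square_factor[of T] less.prems by (auto simp: dvd_def)
    have nz: "T1 \<noteq> 0" "D \<noteq> 0" using T1 less.prems by auto
    have "degree T1 < degree T" using T1 nz D by (simp add: degree_mult_eq)
    moreover have "\<forall>w. even (order w (cpoly T1))"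
    proof
      fix w
      have "order w (cpoly T) = 2 * order w (cpoly D) + order w (cpoly T1)"
        using nz by (simp add: T1 cpoly_mult order_mult cpoly_eq_0)
      then show "even (order w (cpoly T1))" using less.prems(2) by (metis even_add even_mult_iff even_numeral)
    qed
    moreover have "poly T1 x0 > 0"
      using less.prems(3) by (simp add: T1 zero_less_mult_iff)
    ultimately obtain g1 where "T1 = g1 * g1" using less.hyps nz by blast
    then show ?thesis using T1 by (intro exI[of _ "D * g1"]) (simp add: algebra_simps)
  qed
qed

section \<open>Arithmetic in the function field and square classes\<close>

lemma to_fract_mult: "to_fract (a * b) = to_fract a * to_fract b" by (simp add: to_fract_def)
lemma to_fract_add: "to_fract (a + b) = to_fract a + to_fract b" by (simp add: to_fract_def)
lemma to_fract_diff: "to_fract (a - b) = to_fract a - to_fract b" by (simp add: to_fract_def)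
lemma to_fract_uminus: "to_fract (- a) = - to_fract a" by (simp add: to_fract_def)
lemma to_fract_0: "to_fract 0 = 0" by (simp add: to_fract_def Zero_fract_def)
lemma to_fract_1: "to_fract 1 = 1" by (simp add: to_fract_def One_fract_def)
lemma to_fract_eq_0: "to_fract a = 0 \<longleftrightarrow> a = 0" by (simp add: to_fract_def eq_fract Zero_fract_def)

interpretation ff: comm_monoid "ff_mult q" "(1, 0)" for q
  by unfold_locales (auto simp: ff_mult_def algebra_simps split: prod.splits)

lemmas ff_ac = ff.assoc ff.commute ff.left_commute

lemma ff_mult_to_fract:
  "ff_mult q (to_fract a, to_fract b) (to_fract c, to_fract d)
   = (to_fract (a * c - b * d * q), to_fract (a * d + b * c))"
  by (simp add: ff_mult_def to_fract_mult to_fract_diff to_fract_add)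

definition pp :: "real poly \<Rightarrow> ffel" where "pp P = (to_fract P, 0)"

lemma pp_mult: "ff_mult q (pp A) (pp B) = pp (A * B)"
  by (simp add: pp_def ff_mult_def to_fract_mult)

lemma pp_nz: "P \<noteq> 0 \<Longrightarrow> pp P \<noteq> (0, 0)"
  by (simp add: pp_def to_fract_eq_0)

lemma pp_1: "pp 1 = (1, 0)" by (simp add: pp_def to_fract_1)

lemma ff_of_pp: "ff_of (P, 0) = pp P" by (simp add: ff_of_def pp_def to_fract_0)

definition ff_norm :: "real poly \<Rightarrow> ffel \<Rightarrow> real poly fract" where
  "ff_norm q z = fst z * fst z + to_fract q * snd z * snd z"

lemma ff_norm_mult: "ff_norm q (ff_mult q f g) = ff_norm q f * ff_norm q g"
  by (auto simp: ff_mult_def ff_norm_def algebra_simps split: prod.splits)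

definition ff_inv :: "real poly \<Rightarrow> ffel \<Rightarrow> ffel" where
  "ff_inv q z = (fst z / ff_norm q z, - snd z / ff_norm q z)"

text \<open>When -q is not a square in \<real>(x), the pairs (a, b) form the field \<real>(C); there the
  relation "b lies in the square class of a" is a congruence, and we develop its
  basic calculus.\<close>
locale function_field =
  fixes q :: "real poly"
  assumes not_square: "\<And>c. c * c \<noteq> - to_fract q"
begin

lemma ff_norm_eq_0: "ff_norm q z = 0 \<longleftrightarrow> z = (0, 0)"
proof
  assume n: "ff_norm q z = 0"
  obtain a b where z: "z = (a, b)" by (cases z)
  show "z = (0, 0)"
  proof (cases "b = 0")
    case True then show ?thesis using n z by (simp add: ff_norm_def)
  next
    case False
    have "a * a + to_fract q * b * b = 0" using n z by (simp add: ff_norm_def)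
    then have "(a / b) * (a / b) = - to_fract q" using False by (simp add: field_simps)
    then show ?thesis using not_square by blast
  qed
qed (simp add: ff_norm_def)

lemma ff_mult_inv: assumes "z \<noteq> (0, 0)" shows "ff_mult q z (ff_inv q z) = (1, 0)"
proof -
  obtain a b where z: "z = (a, b)" by (cases z)
  have "a * a + to_fract q * b * b \<noteq> 0" using ff_norm_eq_0[of z] assms z by (simp add: ff_norm_def)
  then show ?thesis
    by (simp add: z ff_mult_def ff_inv_def ff_norm_def diff_divide_distrib algebra_simps)
       (simp add: add_divide_distrib[symmetric])
qed

lemma ff_mult_nz: "f \<noteq> (0, 0) \<Longrightarrow> g \<noteq> (0, 0) \<Longrightarrow> ff_mult q f g \<noteq> (0, 0)"
  using ff_norm_eq_0 ff_norm_mult by (metis mult_eq_0_iff)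

lemma ff_inv_nz: "z \<noteq> (0, 0) \<Longrightarrow> ff_inv q z \<noteq> (0, 0)"
  using ff_mult_inv[of z] by (auto simp: ff_mult_def)

lemma square_cancel:
  assumes "ff_mult q (ff_mult q a a) b = ff_mult q k k" "a \<noteq> (0, 0)"
  shows "\<exists>h. b = ff_mult q h h"
proof -
  define ia where "ia = ff_inv q a"
  have i: "ff_mult q a ia = (1, 0)" using ff_mult_inv[OF assms(2)] by (simp add: ia_def)
  have "b = ff_mult q b (ff_mult q (ff_mult q a ia) (ff_mult q a ia))" using i by simp
  also have "\<dots> = ff_mult q (ff_mult q (ff_mult q a a) b) (ff_mult q ia ia)" by (simp add: ff_ac)
  also have "\<dots> = ff_mult q (ff_mult q k ia) (ff_mult q k ia)" using assms(1) by (simp add: ff_ac)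
  finally show ?thesis by blast
qed

definition sq_equiv :: "ffel \<Rightarrow> ffel \<Rightarrow> bool" where
  "sq_equiv a b \<longleftrightarrow> b \<in> sq_class q a"

lemma sq_equiv_iff: "sq_equiv a b \<longleftrightarrow> (\<exists>h. h \<noteq> (0, 0) \<and> b = ff_mult q a (ff_mult q h h))"
  by (simp add: sq_equiv_def sq_class_def)

lemma sq_equiv_refl: "sq_equiv a a"
  unfolding sq_equiv_iff by (rule exI[of _ "(1, 0)"]) (simp add: ff.commute[of q a])

lemma sq_equiv_mult:
  assumes "sq_equiv a b" "sq_equiv c d" shows "sq_equiv (ff_mult q a c) (ff_mult q b d)"
proof -
  obtain h k where h: "h \<noteq> (0, 0)" "b = ff_mult q a (ff_mult q h h)"
    and k: "k \<noteq> (0, 0)" "d = ff_mult q c (ff_mult q k k)"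
    using assms unfolding sq_equiv_iff by blast
  then have "ff_mult q b d = ff_mult q (ff_mult q a c) (ff_mult q (ff_mult q h k) (ff_mult q h k))"
    by (simp add: ff_ac)
  moreover have "ff_mult q h k \<noteq> (0, 0)" using h k by (simp add: ff_mult_nz)
  ultimately show ?thesis unfolding sq_equiv_iff by blast
qed

lemma sq_equiv_trans:
  assumes "sq_equiv a b" "sq_equiv b c" shows "sq_equiv a c"
proof -
  obtain h k where h: "h \<noteq> (0, 0)" "b = ff_mult q a (ff_mult q h h)"
    and k: "k \<noteq> (0, 0)" "c = ff_mult q b (ff_mult q k k)"
    using assms unfolding sq_equiv_iff by blast
  then have "c = ff_mult q a (ff_mult q (ff_mult q h k) (ff_mult q h k))" by (simp add: ff_ac)
  moreover have "ff_mult q h k \<noteq> (0, 0)" using h k by (simp add: ff_mult_nz)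
  ultimately show ?thesis unfolding sq_equiv_iff by blast
qed

lemma sq_equiv_sym:
  assumes "sq_equiv a b" shows "sq_equiv b a"
proof -
  obtain h where h: "h \<noteq> (0, 0)" "b = ff_mult q a (ff_mult q h h)"
    using assms unfolding sq_equiv_iff by blast
  have "ff_mult q b (ff_mult q (ff_inv q h) (ff_inv q h))
      = ff_mult q a (ff_mult q (ff_mult q h (ff_inv q h)) (ff_mult q h (ff_inv q h)))"
    by (simp add: h(2) ff_ac)
  also have "\<dots> = a" using ff_mult_inv[OF h(1)] by simp
  finally show ?thesis unfolding sq_equiv_iff using ff_inv_nz[OF h(1)] by metis
qed

lemma sq_equiv_square: "h \<noteq> (0, 0) \<Longrightarrow> sq_equiv a (ff_mult q a (ff_mult q h h))"
  unfolding sq_equiv_iff by blast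

lemma sq_equiv_if_product_square:
  assumes "ff_mult q a b = ff_mult q h h" "a \<noteq> (0, 0)" "h \<noteq> (0, 0)"
  shows "sq_equiv a b"
proof -
  define k where "k = ff_mult q h (ff_inv q a)"
  have i: "ff_mult q a (ff_inv q a) = (1, 0)" using ff_mult_inv assms by simp
  have "ff_mult q a (ff_mult q k k)
      = ff_mult q (ff_mult q a b) (ff_mult q a (ff_mult q (ff_inv q a) (ff_inv q a)))"
    using assms(1) by (simp add: k_def ff_ac)
  also have "\<dots> = ff_mult q b (ff_mult q (ff_mult q a (ff_inv q a)) (ff_mult q a (ff_inv q a)))"
    by (simp add: ff_ac)
  finally have "b = ff_mult q a (ff_mult q k k)" using i by simp
  moreover have "k \<noteq> (0, 0)" using assms by (simp add: k_def ff_mult_nz ff_inv_nz)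
  ultimately show ?thesis unfolding sq_equiv_iff by blast
qed

lemma product_square_if_sq_equiv:
  assumes "sq_equiv a b" shows "\<exists>k. ff_mult q a b = ff_mult q k k"
proof -
  obtain h where "b = ff_mult q a (ff_mult q h h)" using assms unfolding sq_equiv_iff by blast
  then have "ff_mult q a b = ff_mult q (ff_mult q a h) (ff_mult q a h)" by (simp add: ff_ac)
  then show ?thesis by blast
qed

lemma sq_equiv_iff_class_eq: "sq_equiv a b \<longleftrightarrow> sq_class q a = sq_class q b"
  using sq_equiv_refl sq_equiv_trans sq_equiv_sym unfolding sq_equiv_def by blast

end

section \<open>Polynomials that are not squares in the function field\<close>

lemma order_parity_of_square_ratio:
  assumes "A * (X * X) = B * (Y * Y)" "A \<noteq> 0" "B \<noteq> 0" "X \<noteq> 0" "Y \<noteq> 0"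
  shows "even (order z (cpoly A) + order z (cpoly B))"
proof -
  have "cpoly A * (cpoly X * cpoly X) = cpoly B * (cpoly Y * cpoly Y)"
    using assms(1) by (metis cpoly_mult)
  then have "order z (cpoly A) + 2 * order z (cpoly X) = order z (cpoly B) + 2 * order z (cpoly Y)"
    using assms by (metis order_mult cpoly_eq_0 mult_eq_0_iff mult_2)
  moreover have "\<And>a b x y :: nat. a + 2 * x = b + 2 * y \<Longrightarrow> even (a + b)" by presburger
  ultimately show ?thesis by blast
qed

lemma not_square_ratio:
  assumes "A \<noteq> 0" "B \<noteq> 0" "odd (order z (cpoly A) + order z (cpoly B))"
  shows "to_fract A \<noteq> c * c * to_fract B"
proof
  assume e: "to_fract A = c * c * to_fract B"
  obtain n d where c: "c = Fract n d" and d: "d \<noteq> 0" by (cases c) auto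
  have "Fract A 1 = Fract (n * n * B) (d * d)" using e c d by (simp add: to_fract_def)
  then have e2: "A * (d * d) = B * (n * n)" using d by (simp add: eq_fract algebra_simps)
  have "n \<noteq> 0" using e2 assms d by auto
  then show False using order_parity_of_square_ratio[OF e2] assms d by auto
qed

text \<open>A polynomial P is a square in \<real>(C) only if P or -q P is a square in \<real>(x); so P is not
  a square if it has a root of odd order and P q has one too.\<close>
lemma pp_not_square:
  assumes P: "P \<noteq> 0" and q: "q \<noteq> 0"
    and za: "odd (order za (cpoly P))" and zb: "odd (order zb (cpoly P) + order zb (cpoly q))"
  shows "ff_mult q h h \<noteq> pp P"
proof
  assume sq: "ff_mult q h h = pp P"
  obtain c d where h: "h = (c, d)" by (cases h)
  have e1: "c * c - d * d * to_fract q = to_fract P" and "2 * (c * d) = 0"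
    using sq by (simp_all add: h ff_mult_def pp_def algebra_simps)
  then consider "to_fract P = d * d * to_fract (- q)" | "to_fract P = c * c * to_fract 1"
    by (auto simp: to_fract_uminus to_fract_1)
  then show False
  proof cases
    case 1
    have "odd (order zb (cpoly P) + order zb (cpoly (- q)))" using zb by (simp add: cpoly_uminus)
    then show False using not_square_ratio[OF P] 1 q by (metis neg_equal_0_iff_equal)
  next
    case 2
    have "odd (order za (cpoly P) + order za (cpoly 1))" using za by simp
    then show False using not_square_ratio[OF P] 2 by (metis one_neq_zero)
  qed
qed

section \<open>The norm of a psd element with real zeros, and a polynomial representative\<close>

lemma psd_at_point:
  assumes psd: "cr_psd q (a, b)" and y: "y * y = - poly q x"
  shows "poly a x + poly b x * y \<ge> 0"
  using psd y unfolding cr_psd_def cr_eval_def real_points_def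
  by (force simp: power2_eq_square)

text \<open>The norm a^2 + q b^2 is the product of the values at (x, y) and (x, -y).\<close>
lemma norm_nonneg:
  assumes psd: "cr_psd q (a, b)"
  shows "poly (a * a + q * b * b) x \<ge> 0"
proof (cases "poly q x \<ge> 0")
  case True
  then have "poly q x * (poly b x * poly b x) \<ge> 0" by simp
  then show ?thesis by (simp add: algebra_simps)
next
  case False
  define y where "y = sqrt (- poly q x)"
  have yy: "y * y = - poly q x" "(- y) * (- y) = - poly q x" using False by (simp_all add: y_def)
  have "(poly a x + poly b x * y) * (poly a x + poly b x * (- y)) \<ge> 0"
    using psd_at_point[OF psd yy(1)] psd_at_point[OF psd yy(2)] by simp
  also have "(poly a x + poly b x * y) * (poly a x + poly b x * (- y)) = poly (a * a + q * b * b) x"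
    using yy(1) by (simp add: algebra_simps) (simp add: mult.assoc[symmetric])
  finally show ?thesis .
qed

text \<open>A complex zero z of the norm gives a zero (z, \<plusminus>w) of a + b y on the curve;
  if all zeros of a + b y are real, then z is real and lies under the real curve.\<close>
lemma norm_root_real:
  assumes zr: "cr_zeros_real q (a, b)" and z: "poly (cpoly (a * a + q * b * b)) z = 0"
  shows "Im z = 0 \<and> poly q (Re z) \<le> 0"
proof -
  define Q A B where "Q = poly (cpoly q) z" and "A = poly (cpoly a) z" and "B = poly (cpoly b) z"
  define w where "w = csqrt (- Q)"
  have ww: "w * w = - Q" using power2_csqrt[of "- Q"] by (simp add: w_def power2_eq_square)
  have "(A + B * w) * (A + B * (- w)) = A * A + Q * B * B" using ww by (simp add: algebra_simps)
  also have "\<dots> = 0" using z by (simp add: cpoly_add cpoly_mult A_def B_def Q_def)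
  finally have "A + B * w = 0 \<or> A + B * (- w) = 0" by simp
  moreover have "(z, w) \<in> complex_points q" "(z, - w) \<in> complex_points q"
    using ww by (simp_all add: complex_points_def Q_def power2_eq_square)
  ultimately have real: "Im z = 0" "Im w = 0"
    using zr unfolding cr_zeros_real_def cr_ceval_def by (auto simp: A_def B_def)
  then have "z = of_real (Re z)" "w = of_real (Re w)" by (simp_all add: complex_eq_iff)
  then have "of_real (Re w * Re w) = (of_real (- poly q (Re z)) :: complex)"
    using ww unfolding Q_def by (metis of_real_minus of_real_mult poly_cpoly)
  then have "Re w * Re w = - poly q (Re z)" by (simp only: of_real_eq_iff)
  then show ?thesis using real by (smt (verit) zero_le_square)
qed

text \<open>Hence the norm has only real zeros, of even order (it is nonnegative), so it is a square.\<close>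
lemma norm_square:
  assumes psd: "cr_psd q (a, b)" and zr: "cr_zeros_real q (a, b)"
  shows "\<exists>s. s * s = a * a + q * b * b"
proof (cases "a * a + q * b * b = 0")
  case True then show ?thesis by (intro exI[of _ 0]) simp
next
  case False
  define N where "N = a * a + q * b * b"
  have "even (order z (cpoly N))" for z
  proof (cases "poly (cpoly N) z = 0")
    case True
    then have "z = of_real (Re z)" using norm_root_real[OF zr] by (simp add: N_def complex_eq_iff)
    moreover have "even (order (Re z) N)"
      using even_order_if_nonneg_near[of N 1 "Re z"] False norm_nonneg[OF psd] by (simp add: N_def)
    ultimately show ?thesis using order_cpoly[of N "Re z"] False by (simp add: N_def)
  qed (simp add: order_0I)
  moreover obtain x where "poly N x \<noteq> 0" using nonroot_in[of N 0 1] False by (auto simp: N_def)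
  then have "poly N x > 0" using norm_nonneg[OF psd] by (simp add: N_def order.not_eq_order_implies_strict)
  ultimately obtain g where "N = g * g" using even_order_square False by (metis N_def)
  then show ?thesis by (auto simp: N_def)
qed

lemma representative_exists:
  fixes a b q s0 :: "real poly"
  assumes f: "(a, b) \<noteq> (0, 0)" and q: "q \<noteq> 0" and s0: "s0 * s0 = a * a + q * b * b"
  shows "\<exists>s. s * s = a * a + q * b * b \<and> a + s \<noteq> 0"
proof (cases "a + s0 = 0")
  case True
  have "a - s0 \<noteq> 0"
  proof
    assume "a - s0 = 0"
    with True have "a = 0" "s0 = 0" by (simp_all add: algebra_simps)
    with s0 q have "b = 0" by simp
    then show False using f \<open>a = 0\<close> by simp
  qed
  then show ?thesis using s0 by (intro exI[of _ "- s0"]) simp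
qed (use s0 in blast)

lemma representative_identity:
  fixes a b s q t :: "'a::comm_ring_1"
  assumes "s * s = a * a + q * b * b" "t * t = - q"
  shows "(a + s + b * t)\<^sup>2 = 2 * (a + s) * (a + b * t)"
proof -
  have "(a + s + b * t)\<^sup>2 = (a + s) * (a + s) + 2 * (a + s) * b * t + b * b * (t * t)"
    by (simp add: power2_eq_square algebra_simps)
  also have "\<dots> = 2 * (a + s) * (a + b * t)"
    using assms by (simp add: algebra_simps)
  finally show ?thesis .
qed

lemma representative_nonneg:
  assumes psd: "cr_psd q (a, b)" and s: "s * s = a * a + q * b * b" and qx: "poly q x \<le> 0"
  shows "poly (a + s) x \<ge> 0"
proof -
  define y where "y = sqrt (- poly q x)"
  have yy: "y * y = - poly q x" "(- y) * (- y) = - poly q x" using qx by (simp_all add: y_def)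
  have sx: "poly s x * poly s x = poly a x * poly a x + poly q x * poly b x * poly b x"
    using s by (metis poly_add poly_mult)
  note iden = representative_identity[OF sx]
  have f: "poly a x + poly b x * y \<ge> 0" "poly a x + poly b x * (- y) \<ge> 0"
    using psd_at_point[OF psd yy(1)] psd_at_point[OF psd yy(2)] by simp_all
  have nonneg: "P \<ge> 0" if "Z\<^sup>2 = 2 * P * Y" "Y > 0" for Z P Y :: real
  proof (rule ccontr)
    assume "\<not> P \<ge> 0"
    then have "2 * P * Y < 0" using that(2) by (simp add: mult_neg_pos)
    then show False using that(1) zero_le_power2[of Z] by linarith
  qed
  consider "poly a x + poly b x * y > 0" | "poly a x + poly b x * (- y) > 0"
    | "poly a x + poly b x * y = 0" "poly a x + poly b x * (- y) = 0" using f by linarith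
  then show ?thesis
  proof cases
    case 1 then show ?thesis using nonneg[OF iden[OF yy(1)]] by simp
  next
    case 2 then show ?thesis using nonneg[OF iden[OF yy(2)]] by simp
  next
    case 3
    then have "poly a x + poly s x + poly b x * y = 0" "poly a x + poly s x + poly b x * (- y) = 0"
      using iden[OF yy(1)] iden[OF yy(2)] by simp_all
    then have "poly a x + poly s x = 0" by linarith
    then show ?thesis by simp
  qed
qed

text \<open>Odd-order zeros of p = a + s lie under the real curve or at roots of q: from
  p (s - a) = q b^2, a zero of p that is neither a zero of the norm s^2 nor of q has
  even order.\<close>
lemma representative_odd_zeros:
  assumes zr: "cr_zeros_real q (a, b)" and s: "s * s = a * a + q * b * b"
    and p: "a + s \<noteq> 0" and q: "q \<noteq> 0" and odd: "odd (order z (cpoly (a + s)))"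
  shows "(Im z = 0 \<and> poly q (Re z) \<le> 0) \<or> poly (cpoly q) z = 0"
proof (rule ccontr)
  assume nc: "\<not> ?thesis"
  have pz: "poly (cpoly (a + s)) z = 0" using odd p order_root[of "cpoly (a + s)" z] by auto
  have "poly (cpoly s) z \<noteq> 0"
  proof
    assume "poly (cpoly s) z = 0"
    then have "poly (cpoly (a * a + q * b * b)) z = 0" by (simp flip: s add: cpoly_mult)
    then show False using norm_root_real[OF zr] nc by blast
  qed
  moreover have "poly (cpoly a) z = - poly (cpoly s) z"
    using pz by (simp add: cpoly_add eq_neg_iff_add_eq_0)
  ultimately have saz: "poly (cpoly (s - a)) z \<noteq> 0" by (simp add: cpoly_diff)
  have rel: "(a + s) * (s - a) = q * b * b" using s by (simp add: algebra_simps)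
  have "s - a \<noteq> 0" using saz by auto
  then have "b \<noteq> 0" using rel p by auto
  have "order z (cpoly ((a + s) * (s - a))) = order z (cpoly (q * b * b))" using rel by simp
  then have "order z (cpoly (a + s)) + order z (cpoly (s - a))
      = order z (cpoly q) + order z (cpoly b) + order z (cpoly b)"
    using p \<open>s - a \<noteq> 0\<close> q \<open>b \<noteq> 0\<close> by (simp add: order_cpoly_mult)
  moreover have "order z (cpoly (s - a)) = 0" using saz by (rule order_0I)
  moreover have "order z (cpoly q) = 0" using nc by (intro order_0I) simp
  ultimately show False using odd by simp
qed

context function_field begin

text \<open>f = a + b y lies in the square class of its representative p = a + s, since
  2 p f = (p + b y)^2 and 2 is a square.\<close>
lemma representative_sq_equiv:
  assumes s: "s * s = a * a + q * b * b" and p: "a + s \<noteq> 0"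
  shows "sq_equiv (pp (a + s)) (ff_of (a, b))"
proof -
  have "sq_equiv (pp (a + s)) (ff_mult q (pp (a + s)) (ff_mult q (pp [:sqrt 2:]) (pp [:sqrt 2:])))"
    by (rule sq_equiv_square) (simp add: pp_nz)
  moreover have "ff_mult q (pp (a + s)) (ff_mult q (pp [:sqrt 2:]) (pp [:sqrt 2:])) = pp (2 * (a + s))"
    by (simp add: pp_mult numeral_poly algebra_simps)
  moreover have "sq_equiv (pp (2 * (a + s))) (ff_of (a, b))"
  proof (rule sq_equiv_if_product_square)
    have "(a + s) * (a + s) - b * b * q = s * s - q * b * b + a * a + 2 * a * s" by algebra
    also have "\<dots> = 2 * (a + s) * a - 0 * b * q" unfolding s by algebra
    finally have re: "2 * (a + s) * a - 0 * b * q = (a + s) * (a + s) - b * b * q" by (rule sym)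
    have im: "2 * (a + s) * b + 0 * a = (a + s) * b + b * (a + s)" by algebra
    have "ff_mult q (pp (2 * (a + s))) (ff_of (a, b))
        = ff_mult q (to_fract (2 * (a + s)), to_fract 0) (to_fract a, to_fract b)"
      by (simp add: pp_def ff_of_def to_fract_0)
    also have "\<dots> = ff_mult q (to_fract (a + s), to_fract b) (to_fract (a + s), to_fract b)"
      by (simp only: ff_mult_to_fract re im)
    finally show "ff_mult q (pp (2 * (a + s))) (ff_of (a, b))
        = ff_mult q (to_fract (a + s), to_fract b) (to_fract (a + s), to_fract b)" .
    show "pp (2 * (a + s)) \<noteq> (0, 0)" using p by (simp add: pp_nz)
    show "(to_fract (a + s), to_fract b) \<noteq> (0, 0)" using p by (simp add: to_fract_eq_0)
  qed
  ultimately show ?thesis using sq_equiv_trans by metis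
qed

end

section \<open>The quartic q and the factorisation q = (x - \<alpha>)(x - \<beta>) m\<close>

locale quartic =
  fixes q :: "real poly" and \<alpha> \<beta> :: real
  assumes monic: "lead_coeff q = 1"
    and deg: "degree q = 4"
    and sqfree: "rsquarefree (map_poly complex_of_real q)"
    and indef: "(\<exists>x. poly q x > 0) \<and> (\<exists>x. poly q x < 0)"
    and alpha: "poly q \<alpha> = 0" and beta: "poly q \<beta> = 0"
    and extreme: "\<forall>x. poly q x = 0 \<longrightarrow> \<alpha> \<le> x \<and> x \<le> \<beta>"
begin

lemma q_nz: "q \<noteq> 0" using deg by auto

lemma order_q_root: "poly (cpoly q) z = 0 \<Longrightarrow> order z (cpoly q) = 1"
  using sqfree order_root[of "cpoly q" z] q_nz
  unfolding rsquarefree_def by (metis cpoly_eq_0 le_antisym less_one not_le)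

lemma order_q_le: "order z (cpoly q) \<le> 1"
  using sqfree unfolding rsquarefree_def by (metis le_refl zero_le_one)

lemma order_q_alpha: "order (of_real \<alpha>) (cpoly q) = 1"
  using order_q_root alpha by (simp add: poly_cpoly)

lemma order_q_beta: "order (of_real \<beta>) (cpoly q) = 1"
  using order_q_root beta by (simp add: poly_cpoly)

text \<open>-q is not a square in \<real>(x) (it has a simple root), so the pairs form a field.\<close>
sublocale function_field q
proof
  fix c
  have "odd (order (of_real \<alpha>) (cpoly (- q)) + order (of_real \<alpha>) (cpoly 1))"
    using order_q_alpha by (simp add: cpoly_uminus)
  then have "to_fract (- q) \<noteq> c * c * to_fract 1" using not_square_ratio[of "- q" 1] q_nz by simp
  then show "c * c \<noteq> - to_fract q" by (simp add: to_fract_uminus to_fract_1)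
qed

lemma q_pos_outside: assumes "x < \<alpha> \<or> \<beta> < x" shows "poly q x > 0"
  using assms
proof
  assume x: "x < \<alpha>"
  define r where "r = pcompose q [:0, -1:]"
  have pr: "poly r y = poly q (- y)" for y by (simp add: r_def poly_pcompose)
  have "lead_coeff r = 1" unfolding r_def using monic deg by (subst lead_coeff_comp) auto
  moreover have "\<forall>y>-\<alpha>. poly r y \<noteq> 0" using extreme by (auto simp: pr)
  ultimately have "poly r (- x) > 0" using poly_pos_right_of_roots[of r "- \<alpha>"] x by simp
  then show ?thesis by (simp add: pr)
qed (use poly_pos_right_of_roots[of q \<beta>] monic extreme in force)

lemma q_nonpos_between: "poly q x \<le> 0 \<Longrightarrow> \<alpha> \<le> x \<and> x \<le> \<beta>"
  using q_pos_outside[of x] by force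

lemma alpha_less_beta: "\<alpha> < \<beta>"
proof -
  obtain x where "poly q x < 0" using indef by blast
  then have "\<alpha> \<le> x" "x \<le> \<beta>" "x \<noteq> \<alpha>" "x \<noteq> \<beta>" using q_nonpos_between alpha beta by force+
  then show ?thesis by simp
qed

definition m :: "real poly" where "m = q div ([:-\<alpha>, 1:] * [:-\<beta>, 1:])"

lemma q_split: "q = [:-\<alpha>, 1:] * [:-\<beta>, 1:] * m"
proof -
  obtain q1 where q1: "q = [:-\<alpha>, 1:] * q1" using alpha by (metis poly_eq_0_iff_dvd dvdE)
  have "poly q1 \<beta> = 0" using beta alpha_less_beta by (simp add: q1)
  then obtain q2 where "q1 = [:-\<beta>, 1:] * q2" by (metis poly_eq_0_iff_dvd dvdE)
  then have qq: "q = ([:-\<alpha>, 1:] * [:-\<beta>, 1:]) * q2" using q1 by (metis mult.assoc)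
  have "[:-\<alpha>, 1:] * [:-\<beta>, 1:] \<noteq> 0" by (simp del: mult_pCons_left mult_pCons_right)
  then have "q div ([:-\<alpha>, 1:] * [:-\<beta>, 1:]) = q2"
    using nonzero_mult_div_cancel_left by (simp only: qq)
  then have "m = q2" by (simp only: m_def)
  with qq show ?thesis by simp
qed

lemma m_nz: "m \<noteq> 0" using q_split q_nz by auto

lemma poly_q: "poly q x = (x - \<alpha>) * (x - \<beta>) * poly m x"
  by (subst q_split) (simp add: algebra_simps)

lemma m_monic_quadratic: "m = [:coeff m 0, coeff m 1, 1:]"
proof -
  have d2: "degree ([:-\<alpha>, 1:] * [:-\<beta>, 1:]) = 2" by (subst degree_mult_eq) auto
  have "degree q = degree ([:-\<alpha>, 1:] * [:-\<beta>, 1:]) + degree m"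
    using m_nz by (subst q_split) (rule degree_mult_eq, auto)
  then have dm: "degree m = 2" using deg d2 by simp
  have "lead_coeff q = lead_coeff ([:-\<alpha>, 1:] * [:-\<beta>, 1:] * m)" using q_split by metis
  also have "\<dots> = lead_coeff m" by (simp only: lead_coeff_mult) simp
  finally have "lead_coeff q = lead_coeff m" .
  then have "coeff m 2 = 1" using monic dm by simp
  then show ?thesis using dm
    by (intro poly_eqI) (auto simp: coeff_pCons numeral_2_eq_2 coeff_eq_0 split: nat.split)
qed

lemma m_splits: "\<exists>w0 w1. cpoly m = [:-w0, 1:] * [:-w1, 1:]"
proof -
  define b c where "b = coeff m 1" and "c = coeff m 0"
  define s where "s = csqrt (of_real (b\<^sup>2 - 4 * c))"
  define w0 where "w0 = (- of_real b + s) / 2"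
  define w1 where "w1 = (- of_real b - s) / 2"
  have s2: "s * s = of_real (b\<^sup>2 - 4 * c)" using power2_csqrt by (simp add: s_def power2_eq_square)
  have "w0 * w1 = of_real c" unfolding w0_def w1_def using s2 by (simp add: algebra_simps power2_eq_square)
  moreover have "w0 + w1 = - of_real b" unfolding w0_def w1_def by (simp add: field_simps)
  moreover have "[:-w0, 1:] * [:-w1, 1:] = [:w0 * w1, - (w0 + w1), 1:]" by (simp add: algebra_simps)
  ultimately have "[:-w0, 1:] * [:-w1, 1:] = [:of_real c, of_real b, 1:]" by simp
  also have "\<dots> = cpoly m" by (subst m_monic_quadratic) (simp add: b_def c_def cpoly_pCons)
  finally show ?thesis by metis
qed

lemma roots_of_q:
  assumes cm: "cpoly m = [:-w0, 1:] * [:-w1, 1:]"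
  shows "distinct [of_real \<alpha>, of_real \<beta>, w0, w1]"
    and "poly (cpoly q) z = 0 \<longleftrightarrow> z = of_real \<alpha> \<or> z = of_real \<beta> \<or> z = w0 \<or> z = w1"
proof -
  have cq: "cpoly q = [:-of_real \<alpha>, 1:] * [:-of_real \<beta>, 1:] * ([:-w0, 1:] * [:-w1, 1:])"
    by (subst q_split) (simp only: cpoly_mult cpoly_linear cm)
  have ord: "order z (cpoly q) = (if z = of_real \<alpha> then 1 else 0) + (if z = of_real \<beta> then 1 else 0)
      + (if z = w0 then 1 else 0) + (if z = w1 then 1 else 0)" for z
    by (simp only: cq, subst order_mult, simp, subst order_mult, simp, subst order_mult, simp,
        simp add: order_lin)
  show "distinct [of_real \<alpha>, of_real \<beta>, w0, w1]"
    using ord[of "of_real \<alpha>"] ord[of "of_real \<beta>"] ord[of w0] ord[of w1] alpha_less_beta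
      order_q_le[of "of_real \<alpha>"] order_q_le[of "of_real \<beta>"] order_q_le[of w0] order_q_le[of w1]
    by (auto split: if_split_asm)
  show "poly (cpoly q) z = 0 \<longleftrightarrow> z = of_real \<alpha> \<or> z = of_real \<beta> \<or> z = w0 \<or> z = w1"
    by (simp only: cq poly_mult mult_eq_0_iff) (simp add: algebra_simps)
qed

lemma m_cases:
  "(\<exists>w. Im w \<noteq> 0 \<and> cpoly m = [:-w, 1:] * [:-cnj w, 1:]) \<or>
   (\<exists>r2 r3. \<alpha> < r2 \<and> r2 < r3 \<and> r3 < \<beta> \<and> m = [:-r2, 1:] * [:-r3, 1:])"
proof -
  have conj_pair: "w1 = cnj w0" if "Im w0 \<noteq> 0" "cpoly m = [:-w0, 1:] * [:-w1, 1:]" for w0 w1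
  proof -
    have "poly (cpoly m) (cnj w0) = cnj (poly (cpoly m) w0)" by (rule poly_cpoly_cnj)
    also have "poly (cpoly m) w0 = 0" using that(2) by simp
    finally have "poly (cpoly m) (cnj w0) = 0" by simp
    then have "(cnj w0 - w0) * (cnj w0 - w1) = 0"
      using that(2) by (simp del: mult_pCons_left mult_pCons_right)
    moreover have "cnj w0 \<noteq> w0" using that(1) by (simp add: complex_eq_iff)
    ultimately show ?thesis by simp
  qed
  obtain w0 w1 where cm: "cpoly m = [:-w0, 1:] * [:-w1, 1:]" using m_splits by blast
  then have cm': "cpoly m = [:-w1, 1:] * [:-w0, 1:]" by (simp add: mult.commute)
  consider "Im w0 \<noteq> 0" | "Im w1 \<noteq> 0" | "Im w0 = 0" "Im w1 = 0" by blast
  then show ?thesis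
  proof cases
    case 3
    define r s where "r = Re w0" and "s = Re w1"
    have w: "w0 = of_real r" "w1 = of_real s" using 3 by (auto simp: r_def s_def complex_eq_iff)
    have d: "distinct [of_real \<alpha>, of_real \<beta>, w0, w1]" using roots_of_q(1)[OF cm] .
    have "poly (cpoly q) w0 = 0" "poly (cpoly q) w1 = 0" using roots_of_q(2)[OF cm] by auto
    then have "poly q r = 0" "poly q s = 0" using w by (simp_all add: poly_cpoly)
    then have rs: "\<alpha> < r" "r < \<beta>" "\<alpha> < s" "s < \<beta>" "r \<noteq> s" using extreme d w by force+
    have mrs: "m = [:-r, 1:] * [:-s, 1:]"
      using cm w by (intro cpoly_inj) (simp only: cpoly_mult cpoly_linear)
    show ?thesis
    proof (cases "r < s")
      case True then show ?thesis using mrs rs by blast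
    next
      case False then show ?thesis using mrs rs by (metis linorder_neqE_linordered_idom mult.commute)
    qed
  qed (use conj_pair cm cm' in blast)+
qed

section \<open>Admissible polynomials are, up to squares, products of u = x - \<alpha>, v = \<beta> - x and m\<close>

definition admissible :: "real poly \<Rightarrow> bool" where
  "admissible p \<longleftrightarrow> p \<noteq> 0 \<and> (\<forall>x. poly q x \<le> 0 \<longrightarrow> poly p x \<ge> 0)
     \<and> (\<forall>z. odd (order z (cpoly p)) \<longrightarrow> (Im z = 0 \<and> poly q (Re z) \<le> 0) \<or> poly (cpoly q) z = 0)"

definition W :: "bool \<Rightarrow> bool \<Rightarrow> bool \<Rightarrow> real poly" where
  "W i j k = (if i then [:-\<alpha>, 1:] else 1) * (if j then [:\<beta>, -1:] else 1) * (if k then m else 1)"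

lemma W_nz: "W i j k \<noteq> 0" using m_nz by (simp add: W_def)

text \<open>Away from the roots of q, an admissible p has zeros of even order only: an odd zero
  would lie in the open set where q < 0 and make p change sign there.\<close>
lemma admissible_even_order:
  assumes adm: "admissible p" and nz: "poly (cpoly q) z \<noteq> 0"
  shows "even (order z (cpoly p))"
proof (rule ccontr)
  assume odd: "odd (order z (cpoly p))"
  then have "Im z = 0" and qn: "poly q (Re z) \<le> 0" using adm nz by (auto simp: admissible_def)
  then have zr: "z = of_real (Re z)" by (simp add: complex_eq_iff)
  then have "poly q (Re z) < 0" using nz qn by (metis order.not_eq_order_implies_strict poly_cpoly of_real_0)
  then obtain d where d: "d > 0" "\<forall>x. \<bar>x - Re z\<bar> < d \<longrightarrow> poly q x < 0" using poly_neg_near by blast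
  then have "\<forall>x. \<bar>x - Re z\<bar> < d \<longrightarrow> poly p x \<ge> 0" using adm by (auto simp: admissible_def)
  then have "even (order (Re z) p)" using even_order_if_nonneg_near adm d(1) by (auto simp: admissible_def)
  then show False using odd zr order_cpoly adm by (metis admissible_def)
qed

lemma admissible_corrected_even:
  assumes adm: "admissible p" and cm: "cpoly m = [:-w0, 1:] * [:-w1, 1:]"
    and i: "i = odd (order (of_real \<alpha>) (cpoly p))" and j: "j = odd (order (of_real \<beta>) (cpoly p))"
    and G: "cpoly G = (if odd (order w0 (cpoly p)) then [:-w0, 1:] else 1)
                    * (if odd (order w1 (cpoly p)) then [:-w1, 1:] else 1)"
  shows "even (order z (cpoly (p * (if i then [:-\<alpha>, 1:] else 1) * (if j then [:\<beta>, -1:] else 1) * G)))"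
proof -
  have p: "p \<noteq> 0" using adm by (simp add: admissible_def)
  have "cpoly G \<noteq> 0" unfolding G by simp
  then have G0: "G \<noteq> 0" by (simp add: cpoly_eq_0)
  have ordG: "order z (cpoly G) = (if odd (order w0 (cpoly p)) \<and> z = w0 then 1 else 0)
      + (if odd (order w1 (cpoly p)) \<and> z = w1 then 1 else 0)"
    unfolding G by (simp add: order_mult order_lin del: mult_pCons_left mult_pCons_right)
  have ord: "order z (cpoly (p * (if i then [:-\<alpha>, 1:] else 1) * (if j then [:\<beta>, -1:] else 1) * G))
    = order z (cpoly p) + (if i \<and> z = of_real \<alpha> then 1 else 0) + (if j \<and> z = of_real \<beta> then 1 else 0)
      + order z (cpoly G)"
    using p G0 by (simp add: order_cpoly_mult order_cpoly_opt_lin order_cpoly_opt_lin')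
  have d: "distinct [of_real \<alpha>, of_real \<beta>, w0, w1]" using roots_of_q(1)[OF cm] .
  show ?thesis
  proof (cases "poly (cpoly q) z = 0")
    case True
    then have "z = of_real \<alpha> \<or> z = of_real \<beta> \<or> z = w0 \<or> z = w1" using roots_of_q(2)[OF cm] by blast
    then show ?thesis unfolding ord ordG using d i j by (elim disjE) auto
  next
    case False
    then have "even (order z (cpoly p))" using admissible_even_order[OF adm] by blast
    moreover have "z \<noteq> of_real \<alpha>" "z \<noteq> of_real \<beta>" "z \<noteq> w0" "z \<noteq> w1"
      using False roots_of_q(2)[OF cm] by auto
    ultimately show ?thesis unfolding ord ordG by simp
  qed
qed

lemma admissible_pos_between:
  assumes adm: "admissible p" and "poly q x < 0" "poly p x \<noteq> 0"
  shows "poly p x > 0"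
proof -
  have "poly p x \<ge> 0" using adm assms(2) by (simp add: admissible_def)
  then show ?thesis using assms(3) by simp
qed

lemma admissible_class_nonreal_m:
  assumes adm: "admissible p" and w: "Im w \<noteq> 0" "cpoly m = [:-w, 1:] * [:-cnj w, 1:]"
  shows "\<exists>i j k g. p * W i j k = g * g"
proof -
  have p: "p \<noteq> 0" using adm by (simp add: admissible_def)
  define i j k where "i = odd (order (of_real \<alpha>) (cpoly p))"
    and "j = odd (order (of_real \<beta>) (cpoly p))" and "k = odd (order w (cpoly p))"
  have "cpoly (if k then m else 1)
      = (if odd (order w (cpoly p)) then [:-w, 1:] else 1)
      * (if odd (order (cnj w) (cpoly p)) then [:-cnj w, 1:] else 1)"
    using w(2) order_cnj[OF p] by (simp add: k_def)
  from admissible_corrected_even[OF adm w(2) i_def j_def this]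
  have ev: "\<forall>z. even (order z (cpoly (p * W i j k)))"
    by (simp add: W_def mult.assoc)
  have m_pos: "poly m x > 0" for x
  proof -
    have "complex_of_real (poly m x) = (of_real x - w) * cnj (of_real x - w)"
      using w(2) by (simp flip: poly_cpoly) (simp add: algebra_simps)
    also have "\<dots> = of_real ((Re (of_real x - w))\<^sup>2 + (Im (of_real x - w))\<^sup>2)"
      by (rule complex_mult_cnj)
    finally have "poly m x = (x - Re w)\<^sup>2 + (Im w)\<^sup>2" by (simp only: of_real_eq_iff) simp
    then show ?thesis using w(1) by (simp add: add_nonneg_pos)
  qed
  obtain x where x: "\<alpha> < x" "x < \<beta>" "poly p x \<noteq> 0" using nonroot_in[OF p alpha_less_beta] by blast
  have "poly q x < 0" using x m_pos[of x] by (simp add: poly_q mult_pos_neg mult_neg_pos)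
  then have "poly p x > 0" using admissible_pos_between adm x by blast
  then have "poly (p * W i j k) x > 0" using x m_pos[of x] by (simp add: W_def)
  then show ?thesis using even_order_square[OF _ ev] p W_nz by (metis mult_eq_0_iff)
qed

lemma admissible_class_real_m:
  assumes adm: "admissible p"
    and r: "\<alpha> < r2" "r2 < r3" "r3 < \<beta>" "m = [:-r2, 1:] * [:-r3, 1:]"
  shows "\<exists>i j k g. p * W i j k = g * g"
proof -
  have p: "p \<noteq> 0" using adm by (simp add: admissible_def)
  have cm: "cpoly m = [:-of_real r2, 1:] * [:-of_real r3, 1:]"
    using r(4) by (simp only: cpoly_mult cpoly_linear)
  define i j k2 k3 where "i = odd (order (of_real \<alpha>) (cpoly p))"
    and "j = odd (order (of_real \<beta>) (cpoly p))"
    and "k2 = odd (order (of_real r2) (cpoly p))" and "k3 = odd (order (of_real r3) (cpoly p))"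
  define G where "G = (if k2 then [:-r2, 1:] else 1) * (if k3 then [:-r3, 1:] else 1)"
  define T where "T = p * (if i then [:-\<alpha>, 1:] else 1) * (if j then [:\<beta>, -1:] else 1) * G"
  have "cpoly G = (if k2 then [:-of_real r2, 1:] else 1) * (if k3 then [:-of_real r3, 1:] else 1)"
    by (simp add: G_def cpoly_mult cpoly_linear)
  from admissible_corrected_even[OF adm cm i_def j_def this[unfolded k2_def k3_def]]
  have ev: "\<forall>z. even (order z (cpoly T))" by (simp add: T_def)
  have pq: "poly q x = (x - \<alpha>) * (x - \<beta>) * ((x - r2) * (x - r3))" for x
    by (simp add: poly_q r(4) algebra_simps)
  text \<open>On (r3, \<beta>) all correcting factors are positive, so T is a square \<dots>\<close>
  obtain x1 where x1: "r3 < x1" "x1 < \<beta>" "poly p x1 \<noteq> 0" using nonroot_in[OF p r(3)] by blast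
  have "poly q x1 < 0" using x1 r by (simp add: pq mult_pos_neg mult_neg_pos)
  then have "poly p x1 > 0" using admissible_pos_between adm x1 by blast
  then have "poly T x1 > 0" using x1 r by (simp add: T_def G_def)
  then obtain g where g: "T = g * g" using even_order_square[OF _ ev] p by (force simp: T_def G_def)
  text \<open>\<dots> and on (\<alpha>, r2) the factor G must then be positive, which forces k2 = k3.\<close>
  obtain x0 where x0: "\<alpha> < x0" "x0 < r2" "poly p x0 \<noteq> 0" using nonroot_in[OF p r(1)] by blast
  have "poly q x0 < 0" using x0 r by (simp add: pq mult_pos_neg mult_neg_pos mult_neg_neg)
  then have p0: "poly p x0 > 0" using admissible_pos_between adm x0 by blast
  have "k2 = k3"
  proof (rule ccontr)
    assume "k2 \<noteq> k3"
    then have "poly G x0 < 0" using x0 r by (cases k2) (auto simp: G_def)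
    then have "poly T x0 < 0" using p0 x0 r by (simp add: T_def mult_pos_neg)
    then show False using g by (simp add: not_square_less_zero)
  qed
  then have "G = (if k2 then m else 1)" by (simp add: G_def r(4))
  then have "p * W i j k2 = g * g" using g unfolding T_def W_def by (simp only: mult.assoc)
  then show ?thesis by blast
qed

lemma admissible_class: assumes "admissible p" shows "\<exists>i j k g. p * W i j k = g * g"
  using m_cases
proof (elim disjE exE conjE)
  fix w assume "Im w \<noteq> 0" "cpoly m = [:-w, 1:] * [:-cnj w, 1:]"
  then show ?thesis by (rule admissible_class_nonreal_m[OF assms])
next
  fix r2 r3 assume "\<alpha> < r2" "r2 < r3" "r3 < \<beta>" "m = [:-r2, 1:] * [:-r3, 1:]"
  then show ?thesis by (rule admissible_class_real_m[OF assms])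
qed

end
section \<open>The four square classes generated by u = x - \<alpha> and v = \<beta> - x\<close>

context quartic begin

definition u :: ffel where "u = pp [:-\<alpha>, 1:]"
definition v :: ffel where "v = pp [:\<beta>, -1:]"

definition e :: "bool \<Rightarrow> bool \<Rightarrow> ffel" where
  "e i j = ff_mult q (if i then u else (1, 0)) (if j then v else (1, 0))"

lemma e_mult: "ff_mult q (e i1 j1) (e i2 j2)
   = ff_mult q (e (i1 \<noteq> i2) (j1 \<noteq> j2)) (ff_mult q (e (i1 \<and> i2) (j1 \<and> j2)) (e (i1 \<and> i2) (j1 \<and> j2)))"
  unfolding e_def by (cases i1; cases i2; cases j1; cases j2; simp add: ff_ac)

lemma e_pp: "e i j = pp ((if i then [:-\<alpha>, 1:] else 1) * (if j then [:\<beta>, -1:] else 1))"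
  unfolding e_def u_def v_def
  by (cases i; cases j) (simp_all only: if_True if_False pp_1 [symmetric] pp_mult mult_1_left mult_1_right)

lemma e_nz: "e i j \<noteq> (0, 0)"
  unfolding e_pp by (rule pp_nz) simp

text \<open>u, v and u v are not squares: each has an odd-order root at which q has even
  order, and (times q) one at which the product has odd order.\<close>
lemma e_not_square: assumes "ff_mult q h h = e i j" shows "\<not> i \<and> \<not> j"
proof (rule ccontr)
  assume ij: "\<not> (\<not> i \<and> \<not> j)"
  obtain w0 w1 where cm: "cpoly m = [:-w0, 1:] * [:-w1, 1:]" using m_splits by blast
  have d: "distinct [of_real \<alpha>, of_real \<beta>, w0, w1]" using roots_of_q(1)[OF cm] .
  have w0q: "order w0 (cpoly q) = 1" using roots_of_q(2)[OF cm] order_q_root by simp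
  define P where "P = (if i then [:-\<alpha>, 1:] else 1) * (if j then [:\<beta>, -1:] else (1::real poly))"
  have P: "P \<noteq> 0" by (simp add: P_def)
  have ord: "order z (cpoly P) = (if i \<and> z = of_real \<alpha> then 1 else 0) + (if j \<and> z = of_real \<beta> then 1 else 0)" for z
    unfolding P_def by (simp add: order_cpoly_mult order_cpoly_opt_lin order_cpoly_opt_lin')
  have "ff_mult q h h \<noteq> pp P"
  proof (cases i)
    case True
    show ?thesis
    proof (rule pp_not_square[OF P q_nz, of "of_real \<alpha>" "if j then w0 else of_real \<beta>"])
      show "odd (order (of_real \<alpha>) (cpoly P))" using True alpha_less_beta by (simp add: ord)
      show "odd (order (if j then w0 else of_real \<beta>) (cpoly P)
          + order (if j then w0 else of_real \<beta>) (cpoly q))"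
        using True d w0q order_q_beta alpha_less_beta by (auto simp: ord)
    qed
  next
    case False
    then have j using ij by blast
    show ?thesis
      using False \<open>j\<close> d order_q_alpha alpha_less_beta
      by (intro pp_not_square[OF P q_nz, of "of_real \<beta>" "of_real \<alpha>"]) (auto simp: ord)
  qed
  then show False using assms by (simp add: e_pp P_def)
qed

lemma e_classes_distinct:
  assumes "sq_class q (e i j) = sq_class q (e i' j')" shows "i = i' \<and> j = j'"
proof -
  obtain k where k: "ff_mult q (e i j) (e i' j') = ff_mult q k k"
    using assms product_square_if_sq_equiv sq_equiv_iff_class_eq by blast
  have "ff_mult q (ff_mult q (e (i \<and> i') (j \<and> j')) (e (i \<and> i') (j \<and> j'))) (e (i \<noteq> i') (j \<noteq> j'))
      = ff_mult q k k"
    using e_mult[of i j i' j'] k by (metis ff.commute)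
  then obtain h where "e (i \<noteq> i') (j \<noteq> j') = ff_mult q h h"
    using square_cancel[OF _ e_nz] by blast
  from e_not_square[OF this[symmetric]] show ?thesis by blast
qed

definition four_classes :: "ffel set" where
  "four_classes = {z. \<exists>i j. sq_equiv (e i j) z}"

lemma four_classes_sq_equiv: "z \<in> four_classes \<Longrightarrow> sq_equiv z z' \<Longrightarrow> z' \<in> four_classes"
  unfolding four_classes_def using sq_equiv_trans by blast

lemma e_in_four_classes: "e i j \<in> four_classes"
  unfolding four_classes_def using sq_equiv_refl by blast

lemma four_classes_mult:
  assumes "z1 \<in> four_classes" "z2 \<in> four_classes" shows "ff_mult q z1 z2 \<in> four_classes"
proof -
  obtain i1 j1 i2 j2 where r: "sq_equiv (e i1 j1) z1" "sq_equiv (e i2 j2) z2"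
    using assms unfolding four_classes_def by blast
  have "sq_equiv (e (i1 \<noteq> i2) (j1 \<noteq> j2)) (ff_mult q (e i1 j1) (e i2 j2))"
    by (subst e_mult) (rule sq_equiv_square[OF e_nz])
  then have "sq_equiv (e (i1 \<noteq> i2) (j1 \<noteq> j2)) (ff_mult q z1 z2)"
    by (rule sq_equiv_trans) (rule sq_equiv_mult[OF r])
  then show ?thesis unfolding four_classes_def by blast
qed

lemma four_classes_inv:
  assumes z: "z \<in> four_classes" and g: "ff_mult q z g = (1, 0)" shows "g \<in> four_classes"
proof -
  obtain i j where r: "sq_equiv (e i j) z" using z unfolding four_classes_def by blast
  define a where "a = e i j"
  have "sq_equiv (ff_mult q a (ff_mult q a g)) (ff_mult q a (ff_mult q z g))"
    using sq_equiv_mult[OF sq_equiv_refl sq_equiv_mult[OF r sq_equiv_refl]] by (simp add: a_def)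
  then have "sq_equiv (ff_mult q g (ff_mult q a a)) a" using g by (simp add: ff_ac)
  moreover have "sq_equiv g (ff_mult q g (ff_mult q a a))" using sq_equiv_square[OF e_nz] by (simp add: a_def)
  ultimately have "sq_equiv a g" using sq_equiv_trans sq_equiv_sym by blast
  then show ?thesis unfolding four_classes_def a_def by blast
qed

text \<open>m lies in the class of u v, because u v m = -q = y^2.\<close>
lemma m_in_four_classes: "pp m \<in> four_classes"
proof -
  have "[:\<beta>, -1:] = - [:-\<beta>, 1:]" by simp
  then have "[:-\<alpha>, 1:] * [:\<beta>, -1:] * m = - q"
    by (simp only: mult_minus_right mult_minus_left q_split[symmetric])
  then have "ff_mult q (e True True) (pp m) = ff_mult q (0, 1) (0, 1)"
    by (simp add: e_pp pp_mult) (simp add: ff_mult_def pp_def to_fract_uminus)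
  then have "sq_equiv (e True True) (pp m)"
    by (rule sq_equiv_if_product_square) (simp_all add: e_nz)
  then show ?thesis using e_in_four_classes four_classes_sq_equiv by blast
qed

lemma W_in_four_classes: "pp (W i j k) \<in> four_classes"
proof -
  have "pp (if k then m else 1) \<in> four_classes"
    using m_in_four_classes e_in_four_classes[of False False] by (simp add: e_pp)
  moreover have "pp (W i j k) = ff_mult q (e i j) (pp (if k then m else 1))"
    by (simp only: W_def e_pp pp_mult)
  ultimately show ?thesis using four_classes_mult[OF e_in_four_classes[of i j]] by simp
qed

lemma psd_realzero_in_four_classes:
  assumes "f \<in> psd_realzero_elems q" shows "f \<in> four_classes"
proof -
  obtain a b where f: "f = ff_of (a, b)" "(a, b) \<noteq> (0, 0)" "cr_psd q (a, b)" "cr_zeros_real q (a, b)"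
    using assms unfolding psd_realzero_elems_def by auto
  obtain s where s: "s * s = a * a + q * b * b" "a + s \<noteq> 0"
    using norm_square[OF f(3,4)] representative_exists[OF f(2) q_nz] by blast
  have "admissible (a + s)"
    unfolding admissible_def
    using representative_nonneg[OF f(3) s(1)] representative_odd_zeros[OF f(4) s q_nz] s(2) by blast
  then obtain i j k g where g: "(a + s) * W i j k = g * g" using admissible_class by blast
  have "g \<noteq> 0" using g s(2) W_nz by auto
  then have "sq_equiv (pp (W i j k)) (pp (a + s))"
    using g W_nz by (intro sq_equiv_if_product_square[of _ _ "pp g"]) (simp_all add: pp_mult pp_nz mult.commute)
  then show ?thesis
    using W_in_four_classes representative_sq_equiv[OF s] four_classes_sq_equiv f(1) by blast
qed

lemma generated_in_four_classes: "ff_gen q (psd_realzero_elems q) \<subseteq> four_classes"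
proof
  fix z assume "z \<in> ff_gen q (psd_realzero_elems q)"
  then show "z \<in> four_classes"
  proof (induct rule: ff_gen.induct)
    case one then show ?case using e_in_four_classes[of False False] by (simp add: e_def)
  qed (use psd_realzero_in_four_classes four_classes_mult four_classes_inv in blast)+
qed

lemma linear_psd_realzero:
  assumes "poly q r = 0" and nonneg: "\<forall>x. poly q x \<le> 0 \<longrightarrow> poly [:c, d:] x \<ge> 0"
    and root: "poly [:c, d:] r = 0" and "d \<noteq> 0"
  shows "pp [:c, d:] \<in> psd_realzero_elems q"
proof -
  have "cr_psd q ([:c, d:], 0)"
    unfolding cr_psd_def cr_eval_def real_points_def
    using nonneg by clarsimp (smt (verit) zero_le_power2)
  moreover have "cr_zeros_real q ([:c, d:], 0)"
    unfolding cr_zeros_real_def cr_ceval_def complex_points_def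
  proof clarify
    fix z w :: complex
    assume w: "w\<^sup>2 + poly (cpoly q) z = 0" and z: "poly (cpoly (fst ([:c, d:], 0::real poly))) z
        + poly (cpoly (snd ([:c, d:], 0::real poly))) z * w = 0"
    have "z * of_real d = - of_real c" using z by (simp add: cpoly_pCons eq_neg_iff_add_eq_0 add.commute)
    then have "z = of_real (- c / d)" using \<open>d \<noteq> 0\<close> by (simp add: field_simps)
    moreover have "r = - c / d" using root \<open>d \<noteq> 0\<close> by (simp add: field_simps)
    ultimately have zr: "z = of_real r" by simp
    then have "poly (cpoly q) z = 0" using assms(1) by (simp add: poly_cpoly)
    then show "Im z = 0 \<and> Im w = 0" using w zr by simp
  qed
  ultimately show ?thesis using \<open>d \<noteq> 0\<close> unfolding psd_realzero_elems_def
    by (intro CollectI exI[of _ "([:c, d:], 0::real poly)"]) (simp add: ff_of_pp)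
qed

lemma u_v_psd_realzero: "u \<in> psd_realzero_elems q" "v \<in> psd_realzero_elems q"
  unfolding u_def v_def
  by (rule linear_psd_realzero[OF alpha], use q_nonpos_between in auto)
     (rule linear_psd_realzero[OF beta], use q_nonpos_between in auto)

lemma square_classes_of_generated_group:
  "card (sq_class q ` ff_gen q (psd_realzero_elems q)) = 4
   \<and> sq_class q ` ff_gen q (psd_realzero_elems q)
     = sq_class q ` ff_gen q {ff_of ([:-\<alpha>, 1:], 0), ff_of ([:\<beta>, -1:], 0)}"
proof -
  define A B where "A = ff_gen q (psd_realzero_elems q)"
    and "B = ff_gen q {ff_of ([:-\<alpha>, 1:], 0), ff_of ([:\<beta>, -1:], 0)}"
  define classes where "classes = (\<lambda>(i, j). sq_class q (e i j)) ` UNIV"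
  have "B \<subseteq> A" unfolding A_def B_def
  proof
    fix z assume "z \<in> ff_gen q {ff_of ([:-\<alpha>, 1:], 0), ff_of ([:\<beta>, -1:], 0)}"
    then show "z \<in> ff_gen q (psd_realzero_elems q)"
      by induct (use u_v_psd_realzero in \<open>auto simp: u_def v_def ff_of_pp intro: ff_gen.intros\<close>)
  qed
  moreover have "e i j \<in> B" for i j
    unfolding B_def e_def u_def v_def
    by (auto simp: ff_of_pp intro: ff_gen.intros)
  then have "classes \<subseteq> sq_class q ` B" unfolding classes_def by auto
  moreover have "sq_class q ` A \<subseteq> classes"
    using generated_in_four_classes sq_equiv_iff_class_eq
    unfolding A_def classes_def four_classes_def by fastforce
  ultimately have "sq_class q ` A = classes" "sq_class q ` B = classes" by blast+
  moreover have "card classes = 4"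
  proof -
    have "inj (\<lambda>(i, j). sq_class q (e i j))"
      by (auto intro: injI dest: e_classes_distinct)
    moreover have "card (UNIV :: (bool \<times> bool) set) = 4"
      by (simp flip: UNIV_Times_UNIV add: card_cartesian_product)
    ultimately show ?thesis unfolding classes_def by (simp add: card_image)
  qed
  ultimately show ?thesis unfolding A_def B_def by simp
qed

end

theorem proposition2p10:
  fixes q :: "real poly" and \<alpha> \<beta> :: real
  assumes monic: "lead_coeff q = 1"
    and deg: "degree q = 4"
    and sqfree: "rsquarefree (map_poly complex_of_real q)"
    and indef: "(\<exists>x. poly q x > 0) \<and> (\<exists>x. poly q x < 0)"
    and alpha: "poly q \<alpha> = 0" and beta: "poly q \<beta> = 0"
    and extreme: "\<forall>x. poly q x = 0 \<longrightarrow> \<alpha> \<le> x \<and> x \<le> \<beta>"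
  shows "card (sq_class q ` ff_gen q (psd_realzero_elems q)) = 4
       \<and> sq_class q ` ff_gen q (psd_realzero_elems q)
         = sq_class q ` ff_gen q {ff_of ([:-\<alpha>, 1:], 0), ff_of ([:\<beta>, -1:], 0)}"
proof -
  interpret quartic q \<alpha> \<beta>
    using assms by unfold_locales
  show ?thesis by (rule square_classes_of_generated_group)
qed

end
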